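(* Let $N\ge 5$ be odd. Let $G_{N,2}$ be the graph with vertex set $\mathbb Z_N$ in which two distinct vertices $x,y$ are adjacent iff $y-x\not\equiv\pm2\pmod N$, and $G_{N,1}$ the graph with vertex set $\mathbb Z_N$ in which distinct $x,y$ are adjacent iff $y-x\not\equiv\pm1\pmod N$. Put $\Delta=\sqrt{N(N-4)}$, $\rho=\frac{N-2+\Delta}{2}$. For $u,v\in\mathbb Z_N$ let $q\equiv v-u\pmod N$, let $s\equiv 2^{-1}\pmod N$, and define $\delta_2(q)=\min\{sq\bmod N,\;N-(sq\bmod N)\}$. Then the effective resistance $R^{(2)}(u,v)$ between $u$ and $v$ in $G_{N,2}$ equals the effective resistance in $G_{N,1}$ between two vertices at circulant distance $\delta_2(q)$ (e.g. $0$ and $\delta_2(q)$), and explicitly \[ R^{(2)}(u,v)=\frac{2}{\Delta(\rho^N+1)}\left\{\rho^N-1+(-1)^{\delta_2(q)}\left(\rho^{\delta_2(q)}-\rho^{N-\delta_2(q)}\right)\right\}. \]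
   Context: Effective resistance is computed with unit conductance on every edge. *)

theory Defs
  imports "HOL-Number_Theory.Cong" Complex_Main
begin

text \<open>Vertex set Z_N is represented by {0..<N} (natural numbers), arithmetic mod N.\<close>

definition circ_adj :: "nat \<Rightarrow> nat \<Rightarrow> nat \<Rightarrow> nat \<Rightarrow> bool" where
  "circ_adj N d x y \<longleftrightarrow> x < N \<and> y < N \<and> x \<noteq> y \<and>
     \<not> [int y - int x = int d] (mod int N) \<and> \<not> [int y - int x = - int d] (mod int N)"

definition laplacian :: "nat \<Rightarrow> (nat \<Rightarrow> nat \<Rightarrow> bool) \<Rightarrow> (nat \<Rightarrow> real) \<Rightarrow> nat \<Rightarrow> real" where
  "laplacian N adj phi x = (\<Sum>y\<in>{y. y < N \<and> adj x y}. phi x - phi y)"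

text \<open>Effective resistance: potential difference phi u - phi v for a potential phi
  on the vertex set with unit current injected at u and extracted at v,
  i.e. L phi = 1_u - 1_v.\<close>
definition eff_res :: "nat \<Rightarrow> (nat \<Rightarrow> nat \<Rightarrow> bool) \<Rightarrow> nat \<Rightarrow> nat \<Rightarrow> real" where
  "eff_res N adj u v = (THE r. \<exists>phi. (\<forall>x<N. laplacian N adj phi x =
        (if x = u then 1 else 0) - (if x = v then 1 else 0)) \<and> r = phi u - phi v)"

end

theory Submission
  imports Defs
begin

text \<open>The graph \<open>G(N, d)\<close> is the complement of the cycle \<open>x \<sim> x \<plusminus> d\<close>, so its Laplacian is
  \<open>(N - 2) I - J + S + S\<^sup>-\<^sup>1\<close>, with \<open>J\<close> the all-ones matrix and \<open>S\<close> the shift by \<open>d\<close>.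
  Let \<open>G\<close> be the \<open>N\<close>-periodic solution of \<open>(N - 2) G(z) + G(z + 1) + G(z - 1) = [N dvd z]\<close>;
  \<open>G(k)\<close> is proportional to \<open>\<sigma>\<^sup>k + \<sigma>\<^bsup>N - k\<^esup>\<close> for a root \<open>\<sigma>\<close> of \<open>\<sigma>\<^sup>2 + (N - 2) \<sigma> + 1 = 0\<close>.
  If \<open>m d = 1 (mod N)\<close>, the potential \<open>\<phi>(y) = G(m (y - u)) - G(m (y - v))\<close> satisfies
  \<open>L \<phi> = 1\<^sub>u - 1\<^sub>v\<close> up to the constant coming from \<open>J\<close>, which vanishes because \<open>L \<phi>\<close> sums to zero.
  For \<open>N \<ge> 5\<close> two vertices are adjacent or have a common neighbour, so harmonic functions are
  constant and \<open>R(u, v) = 2 (G(0) - G(m (v - u)))\<close>.  With \<open>d = 2, m = s\<close> and \<open>d = 1, m = 1\<close> both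
  resistances are values of the even function \<open>G\<close> at \<open>\<plusminus> s q\<close>, and \<open>\<sigma> = -\<rho>\<close> gives the formula.\<close>

section \<open>Laplacians of symmetric graphs\<close>

lemma sum_mult_laplacian:
  assumes adj_sym: "\<And>x y. adj x y = adj y x"
  shows "2 * (\<Sum>x<N. f x * laplacian N adj phi x)
    = (\<Sum>x<N. \<Sum>y\<in>{y. y < N \<and> adj x y}. (f x - f y) * (phi x - phi y))"
proof -
  have nbrs: "(\<Sum>y\<in>{y. y < N \<and> adj x y}. g y) = (\<Sum>y<N. if adj x y then g y else 0)"
    for x and g :: "nat \<Rightarrow> real"
    by (simp add: sum.If_cases Collect_conj_eq lessThan_def Int_commute)
  have swap: "(\<Sum>x<N. \<Sum>y\<in>{y. y < N \<and> adj x y}. h x y)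
      = (\<Sum>x<N. \<Sum>y\<in>{y. y < N \<and> adj x y}. h y x)"
    for h :: "nat \<Rightarrow> nat \<Rightarrow> real"
    unfolding nbrs by (subst sum.swap) (simp add: adj_sym)
  have L: "(\<Sum>x<N. f x * laplacian N adj phi x)
      = (\<Sum>x<N. \<Sum>y\<in>{y. y < N \<and> adj x y}. f x * (phi x - phi y))"
    by (simp add: laplacian_def sum_distrib_left)
  also have "\<dots> = (\<Sum>x<N. \<Sum>y\<in>{y. y < N \<and> adj x y}. f y * (phi y - phi x))"
    by (rule swap)
  finally have R: "(\<Sum>x<N. f x * laplacian N adj phi x)
      = (\<Sum>x<N. \<Sum>y\<in>{y. y < N \<and> adj x y}. f y * (phi y - phi x))" .
  show ?thesis
    unfolding mult_2 by (subst (1) L, subst R) (simp add: sum.distrib[symmetric] algebra_simps)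
qed

lemma sum_laplacian_eq_0:
  assumes "\<And>x y. adj x y = adj y x"
  shows "(\<Sum>x<N. laplacian N adj phi x) = 0"
  using sum_mult_laplacian[of adj, OF assms, where f="\<lambda>_. 1"] by simp

lemma harmonic_imp_edge_constant:
  assumes adj_sym: "\<And>x y. adj x y = adj y x"
    and harmonic: "\<And>x. x < N \<Longrightarrow> laplacian N adj psi x = 0"
    and "x < N" "y < N" "adj x y"
  shows "psi x = psi y"
proof -
  let ?nbrs = "\<lambda>x. {y. y < N \<and> adj x y}"
  have "(\<Sum>x<N. \<Sum>y\<in>?nbrs x. (psi x - psi y)\<^sup>2) = 0"
    using sum_mult_laplacian[of adj, OF adj_sym, where N=N and f=psi and phi=psi] harmonic
    by (simp add: power2_eq_square)
  then have "(\<Sum>y\<in>?nbrs x. (psi x - psi y)\<^sup>2) = 0"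
    using \<open>x < N\<close> by (subst (asm) sum_nonneg_eq_0_iff) (auto intro: sum_nonneg)
  then have "(psi x - psi y)\<^sup>2 = 0"
    using assms(3-5) by (subst (asm) sum_nonneg_eq_0_iff) auto
  then show ?thesis by simp
qed

lemma eff_res_eqI:
  assumes adj_sym: "\<And>x y. adj x y = adj y x"
    and connected: "\<And>psi :: nat \<Rightarrow> real.
      (\<And>x y. x < N \<Longrightarrow> y < N \<Longrightarrow> adj x y \<Longrightarrow> psi x = psi y) \<Longrightarrow> psi u = psi v"
    and flow: "\<And>x. x < N \<Longrightarrow>
      laplacian N adj phi x = (if x = u then 1 else 0) - (if x = v then 1 else 0)"
  shows "eff_res N adj u v = phi u - phi v"
  unfolding eff_res_def
proof (rule the_equality)
  show "\<exists>phi'. (\<forall>x<N. laplacian N adj phi' x = (if x = u then 1 else 0) - (if x = v then 1 else 0))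
      \<and> phi u - phi v = phi' u - phi' v"
    using flow by blast
next
  fix r
  assume "\<exists>phi'. (\<forall>x<N. laplacian N adj phi' x = (if x = u then 1 else 0) - (if x = v then 1 else 0))
      \<and> r = phi' u - phi' v"
  then obtain phi' where flow': "\<And>x. x < N \<Longrightarrow> laplacian N adj phi' x
      = (if x = u then 1 else 0) - (if x = v then 1 else 0)" and r: "r = phi' u - phi' v"
    by blast
  have harmonic: "laplacian N adj (\<lambda>x. phi' x - phi x) x = 0" if "x < N" for x
  proof -
    have "laplacian N adj (\<lambda>x. phi' x - phi x) x = laplacian N adj phi' x - laplacian N adj phi x"
      by (simp add: laplacian_def sum_subtractf[symmetric] algebra_simps)
    then show ?thesis using flow[OF that] flow'[OF that] by simp
  qed
  have "phi' u - phi u = phi' v - phi v"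
    using connected[of "\<lambda>x. phi' x - phi x"] harmonic_imp_edge_constant[of adj, OF adj_sym harmonic]
    by blast
  then show "r = phi u - phi v"
    using r by simp
qed

lemma edge_constant_imp_constant:
  fixes N :: nat
  assumes adj_sym: "\<And>x y. adj x y = adj y x"
    and few_non_nbrs: "\<And>x. x < N \<Longrightarrow> card {y. y < N \<and> y \<noteq> x \<and> \<not> adj x y} \<le> 2"
    and "N \<ge> 5"
    and edge_const: "\<And>x y. x < N \<Longrightarrow> y < N \<Longrightarrow> adj x y \<Longrightarrow> psi x = psi y"
    and "a < N" "b < N"
  shows "psi a = psi b"
proof (cases "a = b \<or> adj a b")
  case True
  then show ?thesis using edge_const assms(5,6) by auto
next
  case False
  txt \<open>\<open>a\<close> and \<open>b\<close> lie in both closed non-neighbourhoods, which therefore cover at most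
    \<open>3 + 3 - 2 < N\<close> vertices; any vertex outside is a common neighbour.\<close>
  define C where "C x = {y. y < N \<and> (y = x \<or> \<not> adj x y)}" for x
  have C_eq: "C x = insert x {y. y < N \<and> y \<noteq> x \<and> \<not> adj x y}" if "x < N" for x
    using that by (auto simp: C_def)
  have card_C: "card (C x) \<le> 3" if "x < N" for x
  proof -
    have "card (C x) \<le> Suc (card {y. y < N \<and> y \<noteq> x \<and> \<not> adj x y})"
      unfolding C_eq[OF that] by (rule card_insert_le_m1) simp_all
    then show ?thesis using few_non_nbrs[OF that] by simp
  qed
  have fin: "finite (C x)" for x
    by (rule finite_subset[of _ "{..<N}"]) (auto simp: C_def)
  have "{a, b} \<subseteq> C a \<inter> C b"
    using False assms(5,6) adj_sym[of a b] by (auto simp: C_def)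
  then have "card {a, b} \<le> card (C a \<inter> C b)"
    by (rule card_mono[OF finite_Int[OF disjI1[OF fin]]])
  then have "2 \<le> card (C a \<inter> C b)"
    using False by simp
  then have "card (C a \<union> C b) < card {..<N}"
    using card_Un_Int[OF fin fin, of a b] card_C[OF assms(5)] card_C[OF assms(6)] assms(3) by simp
  then obtain c where c: "c < N" "c \<notin> C a \<union> C b"
  proof -
    have "\<not> {..<N} \<subseteq> C a \<union> C b"
      using card_mono[OF finite_UnI[OF fin fin], of "{..<N}" a b] \<open>card (C a \<union> C b) < card {..<N}\<close>
      by linarith
    then show ?thesis using that by blast
  qed
  then have "adj a c" "adj b c"
    by (auto simp: C_def)
  then show ?thesis
    using edge_const c(1) assms(5,6) by metis
qed

section \<open>Circulant complement graphs\<close>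

definition circ_shift :: "nat \<Rightarrow> int \<Rightarrow> nat \<Rightarrow> nat" where
  "circ_shift N c x = nat ((int x + c) mod int N)"

lemma circ_shift_less: "N > 0 \<Longrightarrow> circ_shift N c x < N"
  by (simp add: circ_shift_def nat_less_iff)

lemma of_nat_circ_shift: "N > 0 \<Longrightarrow> int (circ_shift N c x) = (int x + c) mod int N"
  by (simp add: circ_shift_def)

lemma cong_diff_iff_eq_circ_shift:
  assumes "y < N"
  shows "[int y - int x = c] (mod int N) \<longleftrightarrow> y = circ_shift N c x"
proof -
  have "[int y - int x = c] (mod int N) \<longleftrightarrow> [int y = int x + c] (mod int N)"
    by (simp add: cong_iff_dvd_diff algebra_simps)
  also have "\<dots> \<longleftrightarrow> int y = (int x + c) mod int N"
    using assms by (simp add: cong_def)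
  also have "\<dots> \<longleftrightarrow> y = circ_shift N c x"
    using assms of_nat_circ_shift[of N c x] by auto
  finally show ?thesis .
qed

lemma circ_adj_iff:
  assumes "x < N" "y < N"
  shows "circ_adj N d x y
    \<longleftrightarrow> y \<noteq> x \<and> y \<noteq> circ_shift N (int d) x \<and> y \<noteq> circ_shift N (- int d) x"
  using assms by (auto simp: circ_adj_def cong_diff_iff_eq_circ_shift)

lemma circ_adj_sym: "circ_adj N d x y = circ_adj N d y x"
proof -
  have "[int y - int x = c] (mod int N) \<longleftrightarrow> [int x - int y = - c] (mod int N)" for c
    by (metis cong_minus_minus_iff minus_diff_eq)
  then show ?thesis
    unfolding circ_adj_def by auto
qed

lemma circ_adj_few_non_nbrs:
  assumes "x < N"
  shows "card {y. y < N \<and> y \<noteq> x \<and> \<not> circ_adj N d x y} \<le> 2"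
proof -
  let ?shifts = "{circ_shift N (int d) x, circ_shift N (- int d) x}"
  have "{y. y < N \<and> y \<noteq> x \<and> \<not> circ_adj N d x y} \<subseteq> ?shifts"
    using assms by (auto simp: circ_adj_iff)
  then have "card {y. y < N \<and> y \<noteq> x \<and> \<not> circ_adj N d x y} \<le> card ?shifts"
    by (rule card_mono[rotated]) simp
  also have "\<dots> \<le> 2"
    by (simp add: card_insert_if)
  finally show ?thesis .
qed

lemma circ_shift_distinct:
  assumes "coprime d N" "N \<ge> 3" "x < N"
  shows "circ_shift N (int d) x \<noteq> x" "circ_shift N (- int d) x \<noteq> x"
    "circ_shift N (int d) x \<noteq> circ_shift N (- int d) x"
proof -
  have N_ndvd_d: "\<not> N dvd d" and N_ndvd_2d: "\<not> N dvd 2 * d"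
    using assms(1,2) coprime_dvd_mult_left_iff[of N d 2] coprime_commute[of d N]
    by (auto dest: dvd_imp_le simp: coprime_absorb_left)
  have self: "circ_shift N c x = x \<longleftrightarrow> [0 = c] (mod int N)" for c
    using cong_diff_iff_eq_circ_shift[OF assms(3), of x c] by auto
  show "circ_shift N (int d) x \<noteq> x" "circ_shift N (- int d) x \<noteq> x"
    using N_ndvd_d by (auto simp: self cong_sym_eq[of 0] cong_0_iff)
  show "circ_shift N (int d) x \<noteq> circ_shift N (- int d) x"
  proof
    let ?y = "circ_shift N (- int d) x"
    assume "circ_shift N (int d) x = ?y"
    then have "[int ?y - int x = int d] (mod int N)" "[int ?y - int x = - int d] (mod int N)"
      using cong_diff_iff_eq_circ_shift[OF circ_shift_less, of N] assms(2) by auto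
    then have "[int d = - int d] (mod int N)"
      by (metis cong_sym cong_trans)
    then have "int N dvd 2 * int d"
      by (simp add: cong_iff_dvd_diff)
    then show False
      using N_ndvd_2d by (metis of_nat_dvd_iff of_nat_mult of_nat_numeral)
  qed
qed

lemma laplacian_circ_adj:
  assumes "coprime d N" "N \<ge> 3" "x < N"
  shows "laplacian N (circ_adj N d) phi x
    = (real N - 2) * phi x - (\<Sum>y<N. phi y) + phi (circ_shift N (int d) x) + phi (circ_shift N (- int d) x)"
proof -
  let ?B = "{x, circ_shift N (int d) x, circ_shift N (- int d) x}"
  have nbrs: "{y. y < N \<and> circ_adj N d x y} = {..<N} - ?B"
    using circ_adj_iff[OF assms(3)] by auto
  have "?B \<subseteq> {..<N}"
    using assms circ_shift_less[of N] by auto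
  then have "laplacian N (circ_adj N d) phi x = (\<Sum>y<N. phi x - phi y) - (\<Sum>y\<in>?B. phi x - phi y)"
    unfolding laplacian_def nbrs by (rule sum_diff[OF finite_lessThan])
  also have "(\<Sum>y\<in>?B. phi x - phi y)
      = 2 * phi x - phi (circ_shift N (int d) x) - phi (circ_shift N (- int d) x)"
    using circ_shift_distinct[OF assms] by simp
  finally show ?thesis
    by (simp add: sum_subtractf algebra_simps)
qed

section \<open>The periodic Green function\<close>

lemma char_root_power_sum_rec:
  fixes \<sigma> a :: real
  assumes root: "\<sigma>\<^sup>2 + a * \<sigma> + 1 = 0" and "0 < k" "k < N"
  shows "a * (\<sigma> ^ k + \<sigma> ^ (N - k)) + (\<sigma> ^ (k + 1) + \<sigma> ^ (N - (k + 1)))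
    + (\<sigma> ^ (k - 1) + \<sigma> ^ (N - (k - 1))) = 0"
proof -
  obtain j where j: "k = Suc j"
    using assms(2) not0_implies_Suc by blast
  obtain i where i: "N - k = Suc i"
    using assms(3) by (metis Suc_diff_Suc)
  have exps: "N - Suc j = Suc i" "N - Suc (Suc j) = i" "N - j = Suc (Suc i)"
    using i j by auto
  have "a * (\<sigma> ^ k + \<sigma> ^ (N - k)) + (\<sigma> ^ (k + 1) + \<sigma> ^ (N - (k + 1)))
      + (\<sigma> ^ (k - 1) + \<sigma> ^ (N - (k - 1))) = (\<sigma> ^ j + \<sigma> ^ i) * (\<sigma>\<^sup>2 + a * \<sigma> + 1)"
    unfolding j by (simp add: exps algebra_simps power2_eq_square)
  then show ?thesis
    using root by simp
qed

lemma char_root_power_sum_wrap: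
  fixes \<sigma> a :: real
  assumes root: "\<sigma>\<^sup>2 + a * \<sigma> + 1 = 0" and "N > 0"
  shows "a * (1 + \<sigma> ^ N) + 2 * (\<sigma> + \<sigma> ^ (N - 1)) = (\<sigma> - 1 / \<sigma>) * (1 - \<sigma> ^ N)"
proof -
  obtain n where n: "N = Suc n"
    using assms(2) gr0_implies_Suc by blast
  have "\<sigma> \<noteq> 0"
    using root by auto
  have a_\<sigma>: "a * \<sigma> = - (\<sigma>\<^sup>2 + 1)"
    using root by linarith
  have "\<sigma> * (a * (1 + \<sigma> ^ N) + 2 * (\<sigma> + \<sigma> ^ (N - 1)))
      = (a * \<sigma>) * (1 + \<sigma> ^ N) + 2 * \<sigma> * (\<sigma> + \<sigma> ^ n)"
    by (simp add: n algebra_simps)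
  also have "\<dots> = (\<sigma>\<^sup>2 - 1) * (1 - \<sigma> ^ N)"
    unfolding a_\<sigma> by (simp add: n algebra_simps power2_eq_square)
  also have "\<dots> = \<sigma> * ((\<sigma> - 1 / \<sigma>) * (1 - \<sigma> ^ N))"
    using \<open>\<sigma> \<noteq> 0\<close> by (simp add: field_simps power2_eq_square)
  finally show ?thesis
    using \<open>\<sigma> \<noteq> 0\<close> by simp
qed

text \<open>For a root \<open>\<sigma>\<close> of \<open>\<sigma>\<^sup>2 + a \<sigma> + 1\<close> both \<open>\<sigma>\<^sup>k\<close> and \<open>\<sigma>\<^bsup>N - k\<^esup>\<close> solve the homogeneous
  recurrence \<open>a G(k) + G(k + 1) + G(k - 1) = 0\<close>; their sum is symmetric under \<open>k \<mapsto> N - k\<close> and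
  therefore extends \<open>N\<close>-periodically, and the denominator normalises the jump at \<open>k = 0\<close>.\<close>
definition circ_green :: "nat \<Rightarrow> real \<Rightarrow> int \<Rightarrow> real" where
  "circ_green N \<sigma> z = (let k = nat (z mod int N)
     in (\<sigma> ^ k + \<sigma> ^ (N - k)) / ((\<sigma> - 1 / \<sigma>) * (1 - \<sigma> ^ N)))"

lemma circ_green_cong: "[a = b] (mod int N) \<Longrightarrow> circ_green N \<sigma> a = circ_green N \<sigma> b"
  by (simp add: circ_green_def cong_def)

lemma circ_green_of_nat:
  "k < N \<Longrightarrow> circ_green N \<sigma> (int k) = (\<sigma> ^ k + \<sigma> ^ (N - k)) / ((\<sigma> - 1 / \<sigma>) * (1 - \<sigma> ^ N))"
  by (simp add: circ_green_def)

lemma circ_green_uminus: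
  assumes "N > 0"
  shows "circ_green N \<sigma> (- z) = circ_green N \<sigma> z"
proof (cases "int N dvd z")
  case True
  then show ?thesis
    by (simp add: circ_green_def)
next
  case False
  define k where "k = nat (z mod int N)"
  have "z mod int N \<noteq> 0" "0 \<le> z mod int N" "z mod int N < int N"
    using False assms by (simp_all add: dvd_eq_mod_eq_0)
  then have k: "0 < k" "k < N" "z mod int N = int k"
    unfolding k_def by linarith+
  then have "(- z) mod int N = int (N - k)"
    by (simp add: zmod_zminus1_eq_if of_nat_diff)
  then have "nat ((- z) mod int N) = N - k"
    by (simp only: nat_int)
  then show ?thesis
    unfolding circ_green_def Let_def using k by (simp add: add.commute)
qed

lemma circ_green_eq_circ_dist:
  assumes "N > 0" "[z = int r] (mod int N)" "r < N"
  shows "circ_green N \<sigma> z = circ_green N \<sigma> (int (min r (N - r)))"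
proof (cases "r \<le> N - r")
  case True
  then show ?thesis
    using assms(2) by (simp add: circ_green_cong)
next
  case False
  have "[int (N - r) = - int r] (mod int N)"
    using assms(3) by (simp add: of_nat_diff cong_iff_dvd_diff)
  then have "circ_green N \<sigma> (int (N - r)) = circ_green N \<sigma> z"
    using circ_green_cong[OF assms(2)] circ_green_uminus[OF assms(1)] by (metis circ_green_cong)
  then show ?thesis
    using False by simp
qed

lemma circ_green_rec:
  assumes "N > 0" and root: "\<sigma>\<^sup>2 + a * \<sigma> + 1 = 0" and "\<sigma>\<^sup>2 \<noteq> 1" "\<sigma> ^ N \<noteq> 1"
  shows "a * circ_green N \<sigma> z + circ_green N \<sigma> (z + 1) + circ_green N \<sigma> (z - 1)
    = (if int N dvd z then 1 else 0)"
proof -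
  define c where "c = (\<sigma> - 1 / \<sigma>) * (1 - \<sigma> ^ N)"
  define h where "h k = \<sigma> ^ k + \<sigma> ^ (N - k)" for k
  define k where "k = nat (z mod int N)"
  have "\<sigma> \<noteq> 0"
    using root by auto
  then have "c = (\<sigma>\<^sup>2 - 1) * (1 - \<sigma> ^ N) / \<sigma>"
    by (simp add: c_def field_simps power2_eq_square)
  then have "c \<noteq> 0"
    using assms(3,4) \<open>\<sigma> \<noteq> 0\<close> by simp
  have k: "k < N" "z mod int N = int k"
    using assms(1) by (auto simp: k_def nat_less_iff)
  have G: "circ_green N \<sigma> w = h (nat (w mod int N)) / c" for w
    by (simp add: circ_green_def Let_def h_def c_def)
  have G_z: "circ_green N \<sigma> z = h k / c"
    by (simp add: G k_def)
  have G_succ: "circ_green N \<sigma> (z + 1) = h (k + 1) / c"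
  proof -
    have "(z + 1) mod int N = (int k + 1) mod int N"
      using k by (metis mod_add_left_eq)
    also have "\<dots> = (if k + 1 = N then 0 else int (k + 1))"
      using k(1) by (auto simp: add.commute)
    finally have "nat ((z + 1) mod int N) = (if k + 1 = N then 0 else k + 1)"
      by (auto simp del: of_nat_add of_nat_Suc split: if_splits)
    then show ?thesis
      by (auto simp: G h_def)
  qed
  have "(z - 1) mod int N = (int k - 1) mod int N"
    using k(2) by (metis mod_diff_left_eq)
  also have "\<dots> = int (if k = 0 then N - 1 else k - 1)"
    using k(1) by (simp add: zmod_minus1 of_nat_diff)
  finally have G_pred: "circ_green N \<sigma> (z - 1) = h (if k = 0 then N - 1 else k - 1) / c"
    by (simp add: G)
  have "a * h k + h (k + 1) + h (if k = 0 then N - 1 else k - 1) = (if k = 0 then c else 0)"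
    using char_root_power_sum_rec[OF root _ k(1)] char_root_power_sum_wrap[OF root assms(1)] assms(1)
    by (simp add: h_def c_def)
  then show ?thesis
    using k \<open>c \<noteq> 0\<close>
    by (simp add: G_z G_succ G_pred add_divide_distrib[symmetric] dvd_eq_mod_eq_0)
qed

lemma char_root_nondegenerate:
  fixes \<sigma> :: real
  assumes "N \<ge> 5" "\<sigma>\<^sup>2 + (real N - 2) * \<sigma> + 1 = 0"
  shows "\<sigma>\<^sup>2 \<noteq> 1" "\<sigma> ^ N \<noteq> 1"
proof -
  show sq: "\<sigma>\<^sup>2 \<noteq> 1"
  proof
    assume "\<sigma>\<^sup>2 = 1"
    then have "\<sigma> = 1 \<or> \<sigma> = -1"
      by (simp add: power2_eq_1_iff)
    then show False
      using assms by auto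
  qed
  show "\<sigma> ^ N \<noteq> 1"
  proof
    assume "\<sigma> ^ N = 1"
    then have "\<bar>\<sigma>\<bar> = 1"
      using power_eq_1_iff[of \<sigma> N] assms(1) by simp
    then show False
      using sq by (auto simp: power2_eq_1_iff abs_if split: if_splits)
  qed
qed

section \<open>Effective resistance in circulant complement graphs\<close>

lemma circ_green_rec_mult:
  assumes "N \<ge> 5" and inverse: "[int m * int d = 1] (mod int N)" and "x < N" "w < N"
    and root: "\<sigma>\<^sup>2 + (real N - 2) * \<sigma> + 1 = 0"
  shows "(real N - 2) * circ_green N \<sigma> (int m * (int x - int w))
      + circ_green N \<sigma> (int m * (int x + int d - int w))
      + circ_green N \<sigma> (int m * (int x - int d - int w)) = (if x = w then 1 else 0)"
proof -
  have "coprime (int N) (int m)"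
    using inverse coprime_iff_invertible_int coprime_commute by metis
  then have "int N dvd int m * (int x - int w) \<longleftrightarrow> int N dvd int x - int w"
    by (rule coprime_dvd_mult_right_iff)
  also have "\<dots> \<longleftrightarrow> [int x = int w] (mod int N)"
    by (simp add: cong_iff_dvd_diff)
  also have "\<dots> \<longleftrightarrow> x = w"
    using assms(3,4) by (auto simp: cong_int_iff cong_def)
  finally have "int N dvd int m * (int x - int w) \<longleftrightarrow> x = w" .
  moreover have "[int m * (int x + int d - int w) = int m * (int x - int w) + 1] (mod int N)"
    using cong_add[OF cong_refl[of "int m * (int x - int w)"] inverse] by (simp add: algebra_simps)
  moreover have "[int m * (int x - int d - int w) = int m * (int x - int w) - 1] (mod int N)"
    using cong_diff[OF cong_refl[of "int m * (int x - int w)"] inverse] by (simp add: algebra_simps)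
  ultimately show ?thesis
    using circ_green_rec[OF _ root char_root_nondegenerate[OF assms(1) root]] assms(1)
    by (simp add: circ_green_cong)
qed

lemma circ_green_circ_shift:
  assumes "N > 0"
  shows "circ_green N \<sigma> (int m * (int (circ_shift N c x) - int w))
    = circ_green N \<sigma> (int m * (int x + c - int w))"
proof (rule circ_green_cong)
  have "[int (circ_shift N c x) = int x + c] (mod int N)"
    using assms by (simp add: of_nat_circ_shift cong_mod_left)
  then show "[int m * (int (circ_shift N c x) - int w) = int m * (int x + c - int w)] (mod int N)"
    by (intro cong_mult cong_diff cong_refl)
qed

lemma eff_res_circ_adj:
  assumes "N \<ge> 5" and inverse: "[int m * int d = 1] (mod int N)" and "u < N" "v < N"
    and root: "\<sigma>\<^sup>2 + (real N - 2) * \<sigma> + 1 = 0"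
  shows "eff_res N (circ_adj N d) u v
    = 2 * (circ_green N \<sigma> 0 - circ_green N \<sigma> (int m * (int v - int u)))"
proof -
  let ?G = "circ_green N \<sigma>"
  have "N > 0" "N \<ge> 3"
    using assms(1) by simp_all
  have coprime_d: "coprime d N"
    using inverse coprime_iff_invertible_int coprime_int_iff mult.commute by metis
  define phi where "phi y = ?G (int m * (int y - int u)) - ?G (int m * (int y - int v))" for y
  define S where "S = (\<Sum>y<N. phi y)"
  have lap: "laplacian N (circ_adj N d) phi x = (if x = u then 1 else 0) - (if x = v then 1 else 0) - S"
    if "x < N" for x
  proof -
    have "laplacian N (circ_adj N d) phi x = (real N - 2) * phi x - S
        + phi (circ_shift N (int d) x) + phi (circ_shift N (- int d) x)"
      unfolding S_def by (rule laplacian_circ_adj[OF coprime_d \<open>N \<ge> 3\<close> that])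
    also have "\<dots> = ((real N - 2) * ?G (int m * (int x - int u)) + ?G (int m * (int x + int d - int u))
          + ?G (int m * (int x - int d - int u)))
        - ((real N - 2) * ?G (int m * (int x - int v)) + ?G (int m * (int x + int d - int v))
          + ?G (int m * (int x - int d - int v))) - S"
      unfolding phi_def circ_green_circ_shift[OF \<open>N > 0\<close>] by (simp add: algebra_simps)
    finally show ?thesis
      unfolding circ_green_rec_mult[OF assms(1) inverse that assms(3) root]
        circ_green_rec_mult[OF assms(1) inverse that assms(4) root] .
  qed
  have "0 = (\<Sum>x<N. laplacian N (circ_adj N d) phi x)"
    using sum_laplacian_eq_0[of "circ_adj N d"] circ_adj_sym by metis
  also have "\<dots> = (\<Sum>x<N. (if x = u then 1 else 0) - (if x = v then 1 else 0) - S)"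
    using lap by simp
  also have "\<dots> = - real N * S"
    using assms(3,4) by (simp add: sum_subtractf)
  finally have "S = 0"
    using \<open>N > 0\<close> by simp
  have "eff_res N (circ_adj N d) u v = phi u - phi v"
  proof (rule eff_res_eqI)
    show "psi u = psi v" if "\<And>x y. x < N \<Longrightarrow> y < N \<Longrightarrow> circ_adj N d x y \<Longrightarrow> psi x = psi y"
      for psi :: "nat \<Rightarrow> real"
      using edge_constant_imp_constant[OF circ_adj_sym circ_adj_few_non_nbrs assms(1) that assms(3,4)] .
  qed (use lap \<open>S = 0\<close> circ_adj_sym in auto)
  also have "\<dots> = 2 * (?G 0 - ?G (int m * (int v - int u)))"
    using circ_green_uminus[OF \<open>N > 0\<close>, of \<sigma> "int m * (int v - int u)"]
    by (simp add: phi_def algebra_simps)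
  finally show ?thesis .
qed

lemma larger_root:
  fixes a :: real
  assumes "a \<ge> 2"
  defines "\<rho> \<equiv> (a + sqrt (a\<^sup>2 - 4)) / 2"
  shows "\<rho>\<^sup>2 - a * \<rho> + 1 = 0" "\<rho> - 1 / \<rho> = sqrt (a\<^sup>2 - 4)"
proof -
  have "2\<^sup>2 \<le> a\<^sup>2"
    using assms by (intro power_mono) simp_all
  then have sq: "(sqrt (a\<^sup>2 - 4))\<^sup>2 = a\<^sup>2 - 4" and sqrt_nonneg: "sqrt (a\<^sup>2 - 4) \<ge> 0"
    by simp_all
  have "\<rho> > 0"
    unfolding \<rho>_def using assms(1) sqrt_nonneg by (simp add: add_pos_nonneg)
  have "1 / \<rho> = (a - sqrt (a\<^sup>2 - 4)) / 2"
    using sq \<open>\<rho> > 0\<close> by (simp add: \<rho>_def field_simps power2_eq_square)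
  then show "\<rho> - 1 / \<rho> = sqrt (a\<^sup>2 - 4)"
    by (simp add: \<rho>_def field_simps)
  show "\<rho>\<^sup>2 - a * \<rho> + 1 = 0"
    using sq by (simp add: \<rho>_def field_simps power2_eq_square)
qed

lemma circ_green_neg_diff:
  fixes \<rho> :: real
  assumes "odd N" "k < N"
  shows "2 * (circ_green N (- \<rho>) 0 - circ_green N (- \<rho>) (int k))
    = 2 / ((\<rho> - 1 / \<rho>) * (\<rho> ^ N + 1)) * (\<rho> ^ N - 1 + (-1) ^ k * (\<rho> ^ k - \<rho> ^ (N - k)))"
proof -
  define c where "c = (\<rho> - 1 / \<rho>) * (\<rho> ^ N + 1)"
  have "N > 0"
    using assms(2) by simp
  have sign: "(-1::real) ^ (N - k) = - ((-1) ^ k)"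
    using assms by (cases "even k") (auto simp: neg_one_even_power neg_one_odd_power)
  have denom: "(- \<rho> - 1 / (- \<rho>)) * (1 - (- \<rho>) ^ N) = - c"
    using assms(1) by (simp add: c_def power_minus_odd algebra_simps)
  have "circ_green N (- \<rho>) 0 = - ((1 - \<rho> ^ N) / c)"
    using circ_green_of_nat[OF \<open>N > 0\<close>, of "- \<rho>", unfolded denom] assms(1)
    by (simp add: power_minus_odd)
  moreover have "circ_green N (- \<rho>) (int k) = - ((-1) ^ k * (\<rho> ^ k - \<rho> ^ (N - k)) / c)"
    using circ_green_of_nat[OF assms(2), of "- \<rho>", unfolded denom]
    by (simp add: power_minus[of \<rho>] sign algebra_simps)
  ultimately show ?thesis
    unfolding c_def[symmetric] by (simp add: divide_inverse algebra_simps)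
qed

theorem theorem4p3:
  fixes N u v q s :: nat
  assumes "N \<ge> 5" and "odd N"
    and "u < N" and "v < N"
    and "q < N" and "[int q = int v - int u] (mod int N)"
    and "s < N" and "[2 * s = 1] (mod N)"
  defines "\<Delta> \<equiv> sqrt (real (N * (N - 4)))"
  defines "\<rho> \<equiv> (real N - 2 + \<Delta>) / 2"
  defines "\<delta> \<equiv> min ((s * q) mod N) (N - (s * q) mod N)"
  shows "eff_res N (circ_adj N 2) u v = eff_res N (circ_adj N 1) 0 \<delta>
    \<and> eff_res N (circ_adj N 2) u v =
        2 / (\<Delta> * (\<rho> ^ N + 1)) * (\<rho> ^ N - 1 + (-1) ^ \<delta> * (\<rho> ^ \<delta> - \<rho> ^ (N - \<delta>)))"
proof -
  let ?G = "circ_green N (- \<rho>)"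
  have "\<Delta> = sqrt ((real N - 2)\<^sup>2 - 4)"
    using assms(1) by (simp add: \<Delta>_def of_nat_diff power2_eq_square algebra_simps)
  then have "\<rho>\<^sup>2 - (real N - 2) * \<rho> + 1 = 0" and \<rho>_\<Delta>: "\<rho> - 1 / \<rho> = \<Delta>"
    using larger_root[of "real N - 2"] assms(1) by (simp_all add: \<rho>_def)
  then have root: "(- \<rho>)\<^sup>2 + (real N - 2) * (- \<rho>) + 1 = 0"
    by simp
  have "[int s * int 2 = 1] (mod int N)"
    using assms(8) by (metis cong_int_iff mult.commute of_nat_1 of_nat_mult)
  then have R2: "eff_res N (circ_adj N 2) u v = 2 * (?G 0 - ?G (int s * (int v - int u)))"
    by (rule eff_res_circ_adj[OF assms(1) _ assms(3,4) root])
  have "\<delta> < N"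
    using assms(1) by (simp add: \<delta>_def min_def)
  then have R1: "eff_res N (circ_adj N 1) 0 \<delta> = 2 * (?G 0 - ?G (int \<delta>))"
    using eff_res_circ_adj[of N 1 1 0 \<delta>, OF assms(1) _ _ _ root] by simp
  have "[int s * (int v - int u) = int ((s * q) mod N)] (mod int N)"
    using cong_mult[OF cong_refl[of "int s"] cong_sym[OF assms(6)]] by (simp add: cong_def zmod_int)
  then have "?G (int s * (int v - int u)) = ?G (int \<delta>)"
    unfolding \<delta>_def using assms(1) by (intro circ_green_eq_circ_dist) simp_all
  then show ?thesis
    using R1 R2 circ_green_neg_diff[OF assms(2) \<open>\<delta> < N\<close>, of \<rho>] \<rho>_\<Delta> by simp
qed

end
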